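(* Let $n\ge 1$ be a number of qubits, let $\rho_0$ be an $n$-qubit input state, let $O$ be a Hermitian observable, and let $U(\theta)=\prod_{j=1}^{m}\exp(-i\theta_j H_j)$ be a parameterized unitary with Hermitian generators $H_j$ and parameters $\theta\in\mathbb{R}^m$. Define the cost $C_{\mathrm{uni}}(\theta)=\operatorname{Tr}[O\,U(\theta)\rho_0U(\theta)^\dagger]$, its infimum $C^*_{\mathrm{uni}}=\inf_\theta C_{\mathrm{uni}}(\theta)$, and consider gradient descent $\theta_{t+1}=\theta_t-\eta\nabla C_{\mathrm{uni}}(\theta_t)$ started from a random initialization $\theta_0$, with optimality gaps $\Delta_t=C_{\mathrm{uni}}(\theta_t)-C^*_{\mathrm{uni}}$. Assume: (i) (smoothness) $\|\nabla C_{\mathrm{uni}}(\theta)-\nabla C_{\mathrm{uni}}(\phi)\|_2\le\beta\|\theta-\phi\|_2$ for all $\theta,\phi$, equivalently $\|\nabla^2 C_{\mathrm{uni}}(\theta)\|_2\le\beta$ for all $\theta$, and $0<\eta\le 1/\beta$; (ii) (trajectory-uniform flatness) there are constants $B>0$ and $b>1$ such that $\mathbb{E}\big[\|\nabla C_{\mathrm{uni}}(\theta_t)\|_2^2\big]\le G(n):=m\,B\,b^{-n}$ for all $t\ge 0$ until the expected gap reaches a target $\varepsilon$ (i.e. for every $t$ such that $\mathbb{E}[\Delta_s]>\varepsilon$ for all $s\le t$). Suppose $\mathbb{E}[\Delta_0]\ge\delta_0>0$. If $\mathbb{E}[\Delta_T]\le\varepsilon<\delta_0$, then $$T\ \ge\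 \frac{2(\delta_0-\varepsilon)}{3\eta\,G(n)}=\Omega\!\left(\frac{b^n}{\eta\, m}\right).$$
   Context: Expectations are taken over the random initialization $\theta_0$ (gradient descent is deterministic thereafter). $\|\cdot\|_2$ denotes the Euclidean norm for vectors and the spectral norm for the Hessian. The $\Omega(\cdot)$ is asymptotic in the number of qubits $n$, with $\delta_0,\varepsilon,B,b$ fixed. *)

theory Defs
  imports "HOL-Analysis.Analysis" "HOL-Probability.Probability"
begin

type_synonym 'q cmat = "complex^'q^'q"

definition cadj :: "'q::finite cmat \<Rightarrow> 'q cmat" where
  "cadj A = (\<chi> i j. cnj (A $ j $ i))"

definition ctrace :: "'q::finite cmat \<Rightarrow> complex" where
  "ctrace A = (\<Sum>i\<in>UNIV. A $ i $ i)"

definition chermitian :: "'q::finite cmat \<Rightarrow> bool" where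
  "chermitian A \<longleftrightarrow> cadj A = A"

definition cpsd :: "'q::finite cmat \<Rightarrow> bool" where
  "cpsd A \<longleftrightarrow> (\<forall>v::complex^'q.
      Im (\<Sum>i\<in>UNIV. cnj (v $ i) * (A *v v) $ i) = 0 \<and>
      0 \<le> Re (\<Sum>i\<in>UNIV. cnj (v $ i) * (A *v v) $ i))"

definition density :: "'q::finite cmat \<Rightarrow> bool" where
  "density \<rho> \<longleftrightarrow> chermitian \<rho> \<and> cpsd \<rho> \<and> ctrace \<rho> = 1"

definition cscale :: "complex \<Rightarrow> 'q::finite cmat \<Rightarrow> 'q cmat" where
  "cscale c A = (\<chi> i j. c * A $ i $ j)"

fun cmat_pow :: "'q::finite cmat \<Rightarrow> nat \<Rightarrow> 'q cmat" where
  "cmat_pow A 0 = mat 1"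
| "cmat_pow A (Suc k) = A ** cmat_pow A k"

definition mexp :: "'q::finite cmat \<Rightarrow> 'q cmat" where
  "mexp A = (\<chi> i j. (\<Sum>k. cmat_pow A k $ i $ j / of_nat (fact k)))"

text \<open>U(theta) = exp(-i theta_1 H_1) exp(-i theta_2 H_2) ... exp(-i theta_m H_m),
  the parameter index type 'm being linearly ordered (j_1 < ... < j_m).\<close>
definition U_circ :: "('m::{finite,linorder} \<Rightarrow> 'q::finite cmat) \<Rightarrow> (real, 'm) vec \<Rightarrow> 'q cmat" where
  "U_circ H \<theta> = foldr (\<lambda>j A. mexp (cscale (- \<i> * complex_of_real (\<theta> $ j)) (H j)) ** A)
                       (sorted_list_of_set (UNIV :: 'm set)) (mat 1)"

text \<open>C_uni(theta) = Tr[O U(theta) rho0 U(theta)^dagger] (real for Hermitian O).\<close>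
definition C_uni :: "'q::finite cmat \<Rightarrow> 'q cmat \<Rightarrow> ('m::{finite,linorder} \<Rightarrow> 'q cmat)
                     \<Rightarrow> (real, 'm) vec \<Rightarrow> real" where
  "C_uni \<rho>0 Obs H \<theta> = Re (ctrace (Obs ** U_circ H \<theta> ** \<rho>0 ** cadj (U_circ H \<theta>)))"

definition grad :: "(real^'m \<Rightarrow> real) \<Rightarrow> real^'m \<Rightarrow> real^'m" where
  "grad f x = (THE g. (f has_derivative (\<lambda>h. g \<bullet> h)) (at x))"

definition gd_iter :: "(real^'m \<Rightarrow> real) \<Rightarrow> real \<Rightarrow> real^'m \<Rightarrow> nat \<Rightarrow> real^'m" where
  "gd_iter f \<eta> \<theta>0 t = ((\<lambda>\<theta>. \<theta> - \<eta> *\<^sub>R grad f \<theta>) ^^ t) \<theta>0"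

end

theory Submission
  imports Defs
begin

text \<open>Each gradient step lowers a \<beta>-smooth cost by at most (3/2)\<eta> times the squared gradient
  norm (descent lemma, using \<eta> \<le> 1/\<beta>). Taking expectations, as long as the expected gap stays
  above \<epsilon> it shrinks by at most (3/2)\<eta>G(n) per step, so closing a gap of at least \<delta>0 - \<epsilon>
  takes at least 2(\<delta>0 - \<epsilon>)/(3\<eta>G(n)) steps. All expectations exist because the cost is
  bounded (U(\<theta>) is unitary, so its entries have modulus at most 1), and by smoothness so is
  its gradient.\<close>

section \<open>Boundedness of the cost\<close>

lemma matrix_matrix_mult_nth:
  "((A::'a::semiring_1^'n^'m) ** (B::'a^'p^'n)) $ i $ j = (\<Sum>k\<in>UNIV. A $ i $ k * B $ k $ j)"
  by (simp add: matrix_matrix_mult_def)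

definition entry_l1 :: "'a::real_normed_vector^'n^'m \<Rightarrow> real" where
  "entry_l1 A = (\<Sum>i\<in>UNIV. \<Sum>j\<in>UNIV. norm (A $ i $ j))"

lemma entry_l1_nonneg: "0 \<le> entry_l1 A"
  unfolding entry_l1_def by (intro sum_nonneg) auto

lemma row_sum_le_entry_l1: "(\<Sum>j\<in>UNIV. norm (A $ i $ j)) \<le> entry_l1 A"
  unfolding entry_l1_def by (rule member_le_sum) (auto intro: sum_nonneg)

lemma norm_nth_le_entry_l1: "norm (A $ i $ j) \<le> entry_l1 A"
  by (rule order_trans[OF _ row_sum_le_entry_l1]) (rule member_le_sum, auto)

lemma entry_l1_mult:
  fixes A :: "'a::real_normed_algebra_1^'n^'m" and B :: "'a^'p^'n"
  shows "entry_l1 (A ** B) \<le> entry_l1 A * entry_l1 B"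
proof -
  have "entry_l1 (A ** B) \<le> (\<Sum>i\<in>UNIV. \<Sum>j\<in>UNIV. \<Sum>k\<in>UNIV. norm (A $ i $ k) * norm (B $ k $ j))"
    unfolding entry_l1_def matrix_matrix_mult_nth
    by (intro sum_mono order_trans[OF norm_sum]) (simp add: norm_mult_ineq)
  also have "\<dots> = (\<Sum>i\<in>UNIV. \<Sum>k\<in>UNIV. norm (A $ i $ k) * (\<Sum>j\<in>UNIV. norm (B $ k $ j)))"
    by (rule sum.cong[OF refl]) (subst sum.swap, simp add: sum_distrib_left)
  also have "\<dots> \<le> (\<Sum>i\<in>UNIV. \<Sum>k\<in>UNIV. norm (A $ i $ k) * entry_l1 B)"
    by (intro sum_mono mult_left_mono row_sum_le_entry_l1) auto
  also have "\<dots> = entry_l1 A * entry_l1 B"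
    unfolding entry_l1_def by (simp only: sum_distrib_right)
  finally show ?thesis .
qed

lemma entry_l1_mult_le:
  fixes A :: "'a::real_normed_algebra_1^'n^'m" and B :: "'a^'p^'n"
  assumes "entry_l1 A \<le> a" and "entry_l1 B \<le> b"
  shows "entry_l1 (A ** B) \<le> a * b"
  using entry_l1_mult[of A B] mult_mono[OF assms order_trans[OF entry_l1_nonneg assms(1)] entry_l1_nonneg]
  by linarith

lemma entry_l1_cadj: "entry_l1 (cadj A) = entry_l1 A"
  unfolding entry_l1_def cadj_def by (simp add: complex_mod_cnj) (rule sum.swap)

lemma norm_ctrace_le_entry_l1: "norm (ctrace A) \<le> entry_l1 A"
  unfolding ctrace_def entry_l1_def
  by (intro order_trans[OF norm_sum] sum_mono member_le_sum) auto

lemma entry_l1_mat_1: "entry_l1 (mat 1 :: 'a::real_normed_algebra_1^'n^'n) = real CARD('n)"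
  unfolding entry_l1_def mat_def by (simp add: if_distrib[of norm] cong: if_cong)

lemma entry_l1_cmat_pow: "entry_l1 (cmat_pow A k) \<le> real CARD('q) * entry_l1 A ^ k"
  for A :: "'q::finite cmat"
proof (induction k)
  case 0
  show ?case by (simp add: entry_l1_mat_1)
next
  case (Suc k)
  have "entry_l1 (cmat_pow A (Suc k)) \<le> entry_l1 A * entry_l1 (cmat_pow A k)"
    by (simp add: entry_l1_mult)
  also have "\<dots> \<le> entry_l1 A * (real CARD('q) * entry_l1 A ^ k)"
    by (intro mult_left_mono Suc entry_l1_nonneg)
  finally show ?case by (simp add: algebra_simps)
qed

lemma summable_norm_mexp_series:
  "summable (\<lambda>k. norm (cmat_pow A k $ i $ j / of_nat (fact k)))"
  for A :: "'q::finite cmat"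
proof (rule summable_comparison_test)
  show "summable (\<lambda>k. real CARD('q) * (inverse (fact k) * entry_l1 A ^ k))"
    by (intro summable_mult summable_exp)
  have "norm (cmat_pow A k $ i $ j) \<le> real CARD('q) * entry_l1 A ^ k" for k
    using norm_nth_le_entry_l1 entry_l1_cmat_pow by (rule order_trans)
  then show "\<exists>N. \<forall>k\<ge>N. norm (norm (cmat_pow A k $ i $ j / of_nat (fact k)))
      \<le> real CARD('q) * (inverse (fact k) * entry_l1 A ^ k)"
    by (simp add: norm_divide divide_simps mult.commute mult.left_commute)
qed

lemma cmat_pow_add: "cmat_pow A k ** cmat_pow A p = cmat_pow A (k + p)"
  by (induction k) (simp_all add: matrix_mul_assoc[symmetric])

lemma cmat_pow_uminus_nth: "cmat_pow (- A) p $ i $ j = (-1) ^ p * cmat_pow A p $ i $ j"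
  by (induction p arbitrary: i j)
    (simp_all add: matrix_matrix_mult_nth sum_distrib_left sum_negf mult.left_commute)

lemma sum_alternating_inverse_fact:
  "(\<Sum>k\<le>n. (-1::'a::field_char_0) ^ (n - k) / (fact k * fact (n - k))) = (if n = 0 then 1 else 0)"
proof -
  have "(\<Sum>k\<le>n. (-1::'a) ^ (n - k) / (fact k * fact (n - k)))
      = (\<Sum>k\<le>n. of_nat (n choose k) * 1 ^ k * (-1::'a) ^ (n - k)) / fact n"
    by (simp add: sum_divide_distrib binomial_fact field_simps)
  also have "\<dots> = (1 + (-1::'a)) ^ n / fact n"
    by (simp only: binomial_ring)
  finally show ?thesis by simp
qed

lemma cauchy_coefficient_mexp_uminus:
  "(\<Sum>l\<in>UNIV. \<Sum>k\<le>n. cmat_pow A k $ i $ l / of_nat (fact k)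
                      * (cmat_pow (- A) (n - k) $ l $ j / of_nat (fact (n - k))))
     = (if n = 0 then mat 1 $ i $ j else 0)"
proof -
  have "(\<Sum>l\<in>UNIV. \<Sum>k\<le>n. cmat_pow A k $ i $ l / of_nat (fact k)
                      * (cmat_pow (- A) (n - k) $ l $ j / of_nat (fact (n - k))))
      = (\<Sum>k\<le>n. (-1) ^ (n - k) / (fact k * fact (n - k))
                  * (cmat_pow A k ** cmat_pow A (n - k)) $ i $ j)"
    unfolding cmat_pow_uminus_nth matrix_matrix_mult_nth sum_distrib_left
    by (subst sum.swap) (simp add: field_simps)
  also have "\<dots> = (\<Sum>k\<le>n. (-1) ^ (n - k) / (fact k * fact (n - k))) * cmat_pow A n $ i $ j"
    by (simp add: cmat_pow_add sum_distrib_right)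
  finally show ?thesis by (simp add: sum_alternating_inverse_fact)
qed

lemma mexp_mult_mexp_uminus: "mexp A ** mexp (- A) = mat 1"
proof -
  have "(mexp A ** mexp (- A)) $ i $ j = mat 1 $ i $ j" for i j
  proof -
    define a where "a l k = cmat_pow A k $ i $ l / of_nat (fact k)" for l k
    define b where "b l k = cmat_pow (- A) k $ l $ j / of_nat (fact k)" for l k
    have sa: "summable (\<lambda>k. norm (a l k))" and sb: "summable (\<lambda>k. norm (b l k))" for l
      unfolding a_def b_def by (rule summable_norm_mexp_series)+
    have "(mexp A ** mexp (- A)) $ i $ j = (\<Sum>l\<in>UNIV. (\<Sum>k. a l k) * (\<Sum>k. b l k))"
      by (simp add: matrix_matrix_mult_nth mexp_def a_def b_def)
    also have "\<dots> = (\<Sum>l\<in>UNIV. \<Sum>n. \<Sum>k\<le>n. a l k * b l (n - k))"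
      by (simp add: Cauchy_product[OF sa sb])
    also have "\<dots> = (\<Sum>n. \<Sum>l\<in>UNIV. \<Sum>k\<le>n. a l k * b l (n - k))"
      by (rule suminf_sum[symmetric]) (use summable_Cauchy_product[OF sa sb] in auto)
    also have "\<dots> = (\<Sum>n. if n = 0 then mat 1 $ i $ j else 0)"
      unfolding a_def b_def cauchy_coefficient_mexp_uminus ..
    also have "\<dots> = mat 1 $ i $ j"
      using sums_single[of 0 "\<lambda>_. mat 1 $ i $ j"] sums_unique by metis
    finally show ?thesis .
  qed
  then show ?thesis by (simp add: vec_eq_iff)
qed

lemma cadj_nth [simp]: "cadj A $ i $ j = cnj (A $ j $ i)"
  by (simp add: cadj_def)

lemma cadj_mult: "cadj (A ** B) = cadj B ** cadj A"
  by (simp add: vec_eq_iff matrix_matrix_mult_nth mult.commute)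

lemma cadj_mat_1 [simp]: "cadj (mat 1) = mat 1"
  by (simp add: vec_eq_iff mat_def)

lemma cadj_cmat_pow: "cadj (cmat_pow A k) = cmat_pow (cadj A) k"
proof (induction k)
  case (Suc k)
  have "cadj (cmat_pow A (Suc k)) = cmat_pow (cadj A) k ** cadj A"
    by (simp add: cadj_mult Suc)
  also have "\<dots> = cmat_pow (cadj A) (Suc k)"
    using cmat_pow_add[of "cadj A" k 1] cmat_pow_add[of "cadj A" 1 k] by simp
  finally show ?case .
qed simp

lemma cadj_mexp: "cadj (mexp A) = mexp (cadj A)"
proof -
  have "cnj (\<Sum>k. cmat_pow A k $ j $ i / of_nat (fact k))
      = (\<Sum>k. cmat_pow (cadj A) k $ i $ j / of_nat (fact k))" for i j
  proof -
    have "summable (\<lambda>k. cmat_pow A k $ j $ i / of_nat (fact k))"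
      by (rule summable_norm_cancel[OF summable_norm_mexp_series])
    then have "(\<lambda>k. cnj (cmat_pow A k $ j $ i / of_nat (fact k)))
               sums cnj (\<Sum>k. cmat_pow A k $ j $ i / of_nat (fact k))"
      by (simp only: sums_cnj summable_sums)
    then show ?thesis
      by (simp add: cadj_cmat_pow[symmetric] sums_iff)
  qed
  then show ?thesis by (simp add: vec_eq_iff mexp_def)
qed

definition unitary :: "'q::finite cmat \<Rightarrow> bool" where
  "unitary V \<longleftrightarrow> cadj V ** V = mat 1"

lemma unitary_mat_1: "unitary (mat 1)"
  by (simp add: unitary_def)

lemma unitary_mult: "unitary V \<Longrightarrow> unitary W \<Longrightarrow> unitary (V ** W)"
  unfolding unitary_def cadj_mult by (metis matrix_mul_assoc matrix_mul_lid)

lemma unitary_mexp_skew: "cadj X = - X \<Longrightarrow> unitary (mexp X)"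
  unfolding unitary_def cadj_mexp using mexp_mult_mexp_uminus[of "- X"] by simp

lemma cadj_cscale_hermitian:
  assumes "chermitian H" shows "cadj (cscale c H) = cscale (cnj c) H"
proof -
  have "cnj (H $ j $ i) = H $ i $ j" for i j
    using arg_cong[OF assms[unfolded chermitian_def], of "\<lambda>M. M $ i $ j"] by simp
  then show ?thesis by (simp add: vec_eq_iff cscale_def)
qed

lemma unitary_U_circ:
  assumes herm: "\<And>j. chermitian (H j)"
  shows "unitary (U_circ H \<theta>)"
proof -
  have step: "unitary (mexp (cscale (- \<i> * complex_of_real (\<theta> $ j)) (H j)))" for j
    by (rule unitary_mexp_skew)
      (simp only: cadj_cscale_hermitian[OF herm], simp add: vec_eq_iff cscale_def)
  have "unitary (foldr (\<lambda>j A. mexp (cscale (- \<i> * complex_of_real (\<theta> $ j)) (H j)) ** A) js (mat 1))"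
    for js
    by (induction js) (auto simp only: foldr.simps comp_apply id_apply intro: unitary_mat_1 unitary_mult[OF step])
  then show ?thesis unfolding U_circ_def .
qed

lemma norm_nth_le_1_if_unitary:
  assumes "unitary V" shows "norm (V $ i $ j) \<le> 1"
proof -
  have "(\<Sum>k\<in>UNIV. cnj (V $ k $ j) * V $ k $ j) = 1"
    using arg_cong[OF assms[unfolded unitary_def], of "\<lambda>M. M $ j $ j"]
    by (simp add: matrix_matrix_mult_nth mat_def)
  then have "(\<Sum>k\<in>UNIV. (norm (V $ k $ j))\<^sup>2) = 1"
    by (metis (no_types, lifting) complex_norm_square mult.commute of_real_eq_1_iff of_real_sum sum.cong)
  moreover have "(norm (V $ i $ j))\<^sup>2 \<le> (\<Sum>k\<in>UNIV. (norm (V $ k $ j))\<^sup>2)"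
    by (rule member_le_sum) auto
  ultimately show ?thesis by (simp add: power_le_one_iff abs_le_square_iff)
qed

lemma entry_l1_le_if_unitary:
  fixes V :: "'q::finite cmat"
  assumes "unitary V" shows "entry_l1 V \<le> real CARD('q) ^ 2"
proof -
  have "entry_l1 V \<le> (\<Sum>i\<in>(UNIV::'q set). \<Sum>j\<in>(UNIV::'q set). 1)"
    unfolding entry_l1_def by (intro sum_mono norm_nth_le_1_if_unitary assms)
  then show ?thesis by (simp add: power2_eq_square)
qed

lemma abs_C_uni_le:
  fixes H :: "'m::{finite,linorder} \<Rightarrow> 'q::finite cmat"
  assumes "\<And>j. chermitian (H j)"
  shows "\<bar>C_uni \<rho>0 Obs H \<theta>\<bar> \<le> entry_l1 Obs * entry_l1 \<rho>0 * real CARD('q) ^ 4"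
proof -
  let ?U = "U_circ H \<theta>" and ?c = "real CARD('q) ^ 2"
  have U: "entry_l1 ?U \<le> ?c"
    by (rule entry_l1_le_if_unitary[OF unitary_U_circ[OF assms]])
  then have U': "entry_l1 (cadj ?U) \<le> ?c"
    by (simp only: entry_l1_cadj)
  have "\<bar>C_uni \<rho>0 Obs H \<theta>\<bar> \<le> norm (ctrace (Obs ** ?U ** \<rho>0 ** cadj ?U))"
    unfolding C_uni_def by (rule abs_Re_le_cmod)
  also have "\<dots> \<le> entry_l1 (Obs ** ?U ** \<rho>0 ** cadj ?U)"
    by (rule norm_ctrace_le_entry_l1)
  also have "\<dots> \<le> entry_l1 Obs * ?c * entry_l1 \<rho>0 * ?c"
    by (intro entry_l1_mult_le order_refl U U')
  finally show ?thesis
    by (simp add: power_numeral_reduce mult_ac)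
qed

section \<open>The descent lemma\<close>

lemma has_derivative_grad:
  fixes f :: "real^'m \<Rightarrow> real"
  assumes "f differentiable (at x)"
  shows "(f has_derivative (\<lambda>h. grad f x \<bullet> h)) (at x)"
proof -
  obtain D where D: "(f has_derivative D) (at x)"
    using assms differentiable_def by blast
  define g where "g = adjoint D 1"
  have "D = (\<lambda>h. g \<bullet> h)"
    using adjoint_works[OF has_derivative_linear[OF D], of _ 1] by (simp add: g_def inner_commute fun_eq_iff)
  with D have g: "(f has_derivative (\<lambda>h. g \<bullet> h)) (at x)"
    by simp
  have "g' = g" if "(f has_derivative (\<lambda>h. g' \<bullet> h)) (at x)" for g'
  proof -
    have "(\<lambda>h. g' \<bullet> h) = (\<lambda>h. g \<bullet> h)"
      by (rule has_derivative_unique[OF that g])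
    then have "(g' - g) \<bullet> (g' - g) = 0"
      by (metis inner_diff_left inner_diff_right diff_self)
    then show ?thesis by simp
  qed
  with g have "grad f x = g"
    unfolding grad_def by (rule the_equality)
  with g show ?thesis by simp
qed

lemma abs_diff_le_of_abs_deriv_le:
  fixes g h g' h' :: "real \<Rightarrow> real"
  assumes "a \<le> b"
    and "\<And>s. a \<le> s \<Longrightarrow> s \<le> b \<Longrightarrow> (g has_real_derivative g' s) (at s)"
    and "\<And>s. a \<le> s \<Longrightarrow> s \<le> b \<Longrightarrow> (h has_real_derivative h' s) (at s)"
    and "\<And>s. a \<le> s \<Longrightarrow> s \<le> b \<Longrightarrow> \<bar>g' s\<bar> \<le> h' s"
  shows "\<bar>g b - g a\<bar> \<le> h b - h a"
proof -
  have "h a - g a \<le> h b - g b"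
    by (rule DERIV_nonneg_imp_nondecreasing[OF assms(1), where f="\<lambda>s. h s - g s"])
      (use assms in \<open>force intro!: derivative_eq_intros\<close>)
  moreover have "h a + g a \<le> h b + g b"
    by (rule DERIV_nonneg_imp_nondecreasing[OF assms(1), where f="\<lambda>s. h s + g s"])
      (use assms in \<open>force intro!: derivative_eq_intros\<close>)
  ultimately show ?thesis by linarith
qed

lemma abs_taylor_remainder_le:
  fixes f :: "real^'m \<Rightarrow> real"
  assumes diff: "\<And>x. f differentiable (at x)"
    and lip: "\<And>x y. norm (grad f x - grad f y) \<le> \<beta> * norm (x - y)"
  shows "\<bar>f (x + d) - f x - grad f x \<bullet> d\<bar> \<le> \<beta> / 2 * (norm d)\<^sup>2"
proof -
  have df: "((\<lambda>s. f (x + s *\<^sub>R d)) has_real_derivative grad f (x + s *\<^sub>R d) \<bullet> d) (at s)" for s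
  proof -
    have "((\<lambda>s. x + s *\<^sub>R d) has_derivative (\<lambda>r. r *\<^sub>R d)) (at s)"
      by (auto intro!: derivative_eq_intros)
    from has_derivative_compose[OF this has_derivative_grad[OF diff]]
    show ?thesis
      by (rule has_derivative_imp_has_field_derivative) simp
  qed
  have "\<bar>(grad f (x + s *\<^sub>R d) - grad f x) \<bullet> d\<bar> \<le> \<beta> * s * (norm d)\<^sup>2" if "0 \<le> s" for s
  proof -
    have "\<bar>(grad f (x + s *\<^sub>R d) - grad f x) \<bullet> d\<bar> \<le> norm (grad f (x + s *\<^sub>R d) - grad f x) * norm d"
      by (rule Cauchy_Schwarz_ineq2)
    also have "\<dots> \<le> \<beta> * norm (s *\<^sub>R d) * norm d"
      using lip[of "x + s *\<^sub>R d" x] by (intro mult_right_mono) auto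
    finally show ?thesis
      using that by (simp add: power2_eq_square mult_ac)
  qed
  then have "\<bar>(f (x + 1 *\<^sub>R d) - 1 * (grad f x \<bullet> d)) - (f (x + 0 *\<^sub>R d) - 0 * (grad f x \<bullet> d))\<bar>
      \<le> \<beta> / 2 * 1\<^sup>2 * (norm d)\<^sup>2 - \<beta> / 2 * 0\<^sup>2 * (norm d)\<^sup>2"
    by (intro abs_diff_le_of_abs_deriv_le[where g' = "\<lambda>s. (grad f (x + s *\<^sub>R d) - grad f x) \<bullet> d"
          and h' = "\<lambda>s. \<beta> * s * (norm d)\<^sup>2"])
      (auto intro!: derivative_eq_intros df simp: inner_diff_left)
  then show ?thesis by (simp add: algebra_simps)
qed

lemma abs_gd_step_taylor_le:
  fixes f :: "real^'m \<Rightarrow> real"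
  assumes diff: "\<And>x. f differentiable (at x)"
    and lip: "\<And>x y. norm (grad f x - grad f y) \<le> \<beta> * norm (x - y)"
  shows "\<bar>f (x - t *\<^sub>R grad f x) - f x + t * (norm (grad f x))\<^sup>2\<bar>
           \<le> \<beta> / 2 * t\<^sup>2 * (norm (grad f x))\<^sup>2"
  using abs_taylor_remainder_le[OF diff lip, of x "- t *\<^sub>R grad f x"]
  by (simp add: power2_norm_eq_inner power_mult_distrib)

lemma gd_step_decrease_le:
  fixes f :: "real^'m \<Rightarrow> real"
  assumes diff: "\<And>x. f differentiable (at x)"
    and lip: "\<And>x y. norm (grad f x - grad f y) \<le> \<beta> * norm (x - y)"
    and step: "0 < \<eta>" "\<eta> \<le> 1 / \<beta>"
  shows "f x - f (x - \<eta> *\<^sub>R grad f x) \<le> 3 / 2 * \<eta> * (norm (grad f x))\<^sup>2"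
proof -
  define N where "N = (norm (grad f x))\<^sup>2"
  have "0 < \<beta>"
    using step zero_less_divide_1_iff order_less_le_trans by metis
  with step have "\<beta> * \<eta> \<le> 1"
    by (simp add: le_divide_eq mult.commute)
  have "f x - f (x - \<eta> *\<^sub>R grad f x) \<le> \<eta> * N + \<beta> / 2 * \<eta>\<^sup>2 * N"
    using abs_gd_step_taylor_le[OF diff lip, of x \<eta>] unfolding N_def by linarith
  also have "\<beta> / 2 * \<eta>\<^sup>2 * N = (\<beta> * \<eta>) * (\<eta> * N) / 2"
    by (simp add: power2_eq_square)
  also have "\<dots> \<le> 1 * (\<eta> * N) / 2"
    using \<open>\<beta> * \<eta> \<le> 1\<close> step by (intro divide_right_mono mult_right_mono) (auto simp: N_def)
  finally show ?thesis by (simp add: N_def)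
qed

lemma norm_grad_sq_le_if_bounded:
  fixes f :: "real^'m \<Rightarrow> real"
  assumes diff: "\<And>x. f differentiable (at x)"
    and lip: "\<And>x y. norm (grad f x - grad f y) \<le> \<beta> * norm (x - y)"
    and "0 < \<beta>" and bounded: "\<And>x. \<bar>f x\<bar> \<le> K"
  shows "(norm (grad f x))\<^sup>2 \<le> 4 * \<beta> * K"
proof -
  define N where "N = (norm (grad f x))\<^sup>2"
  have "1 / \<beta> * N - \<beta> / 2 * (1 / \<beta>)\<^sup>2 * N \<le> f x - f (x - (1 / \<beta>) *\<^sub>R grad f x)"
    using abs_gd_step_taylor_le[OF diff lip, of x "1 / \<beta>"] unfolding N_def by linarith
  also have "\<dots> \<le> 2 * K"
    using bounded[of x] bounded[of "x - (1 / \<beta>) *\<^sub>R grad f x"] by linarith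
  finally show ?thesis
    using \<open>0 < \<beta>\<close> by (simp add: N_def power2_eq_square field_simps)
qed

section \<open>Gradient descent in expectation\<close>

lemma gd_iter_0 [simp]: "gd_iter f \<eta> \<theta>0 0 = \<theta>0"
  by (simp add: gd_iter_def)

lemma gd_iter_Suc:
  "gd_iter f \<eta> \<theta>0 (Suc k) = gd_iter f \<eta> \<theta>0 k - \<eta> *\<^sub>R grad f (gd_iter f \<eta> \<theta>0 k)"
  by (simp add: gd_iter_def)

lemma continuous_on_gd_iter:
  assumes "continuous_on UNIV (grad f)"
  shows "continuous_on UNIV (\<lambda>\<theta>0. gd_iter f \<eta> \<theta>0 k)"
proof (induction k)
  case (Suc k)
  show ?case
    unfolding gd_iter_Suc
    by (intro continuous_intros Suc continuous_on_compose2[OF assms Suc]) auto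
qed simp

lemma integrable_if_continuous_bounded:
  fixes h :: "'a::topological_space \<Rightarrow> real"
  assumes "finite_measure M" "sets M = sets borel"
    and "continuous_on UNIV h" "\<And>x. \<bar>h x\<bar> \<le> K"
  shows "integrable M h"
proof -
  interpret finite_measure M by fact
  have "h \<in> borel_measurable M"
    using borel_measurable_continuous_onI[OF assms(3)] measurable_cong_sets[OF assms(2) refl] by blast
  with assms(4) show ?thesis
    by (intro integrable_const_bound[where B=K]) auto
qed

lemma expected_gd_step_decrease_le:
  fixes f :: "real^'m \<Rightarrow> real" and M :: "(real, 'm) vec measure"
  assumes M: "prob_space M" "sets M = sets borel"
    and diff: "\<And>x. f differentiable (at x)"
    and lip: "\<And>x y. norm (grad f x - grad f y) \<le> \<beta> * norm (x - y)"
    and step: "0 < \<eta>" "\<eta> \<le> 1 / \<beta>"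
    and bounded: "\<And>x. \<bar>f x\<bar> \<le> K"
  shows "(\<integral>\<theta>0. f (gd_iter f \<eta> \<theta>0 k) - c \<partial>M) - (\<integral>\<theta>0. f (gd_iter f \<eta> \<theta>0 (Suc k)) - c \<partial>M)
           \<le> 3 / 2 * \<eta> * (\<integral>\<theta>0. (norm (grad f (gd_iter f \<eta> \<theta>0 k)))\<^sup>2 \<partial>M)"
proof -
  interpret prob_space M by fact
  have "0 < \<beta>"
    using step zero_less_divide_1_iff order_less_le_trans by metis
  have cont_grad: "continuous_on UNIV (grad f)"
    using lip \<open>0 < \<beta>\<close> by (intro lipschitz_on_continuous_on[of \<beta>] lipschitz_onI) (auto simp: dist_norm)
  have cont_f: "continuous_on UNIV f"
    using diff by (meson continuous_at_imp_continuous_on differentiable_imp_continuous_within)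
  have cont_iter: "continuous_on UNIV (\<lambda>\<theta>0. gd_iter f \<eta> \<theta>0 j)" for j
    by (rule continuous_on_gd_iter[OF cont_grad])
  have int_f: "integrable M (\<lambda>\<theta>0. f (gd_iter f \<eta> \<theta>0 j))" for j
    using bounded
    by (intro integrable_if_continuous_bounded[OF finite_measure_axioms M(2)]
        continuous_on_compose2[OF cont_f cont_iter]) auto
  have int_grad: "integrable M (\<lambda>\<theta>0. (norm (grad f (gd_iter f \<eta> \<theta>0 k)))\<^sup>2)"
    using norm_grad_sq_le_if_bounded[OF diff lip \<open>0 < \<beta>\<close> bounded]
    by (intro integrable_if_continuous_bounded[OF finite_measure_axioms M(2), where K="4 * \<beta> * K"]
        continuous_intros continuous_on_compose2[OF cont_grad cont_iter]) auto
  have "(\<integral>\<theta>0. f (gd_iter f \<eta> \<theta>0 k) - c \<partial>M) - (\<integral>\<theta>0. f (gd_iter f \<eta> \<theta>0 (Suc k)) - c \<partial>M)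
      = (\<integral>\<theta>0. f (gd_iter f \<eta> \<theta>0 k) - f (gd_iter f \<eta> \<theta>0 (Suc k)) \<partial>M)"
    using int_f by (simp add: Bochner_Integration.integral_diff prob_space)
  also have "\<dots> \<le> (\<integral>\<theta>0. 3 / 2 * \<eta> * (norm (grad f (gd_iter f \<eta> \<theta>0 k)))\<^sup>2 \<partial>M)"
    using Bochner_Integration.integrable_diff[OF int_f[of k] int_f[of "Suc k"]] int_grad
      gd_step_decrease_le[OF diff lip step]
    by (intro integral_mono) (auto simp: gd_iter_Suc)
  finally show ?thesis by simp
qed

lemma hitting_time_lower_bound:
  fixes gap E :: "nat \<Rightarrow> real"
  assumes decrease: "\<And>k. gap k - gap (Suc k) \<le> c * E k"
    and c: "0 \<le> c" and G: "0 \<le> G"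
    and flat: "\<And>t. \<forall>s\<le>t. \<epsilon> < gap s \<Longrightarrow> E t \<le> G"
    and "gap T \<le> \<epsilon>"
  shows "gap 0 - \<epsilon> \<le> c * real T * G"
proof -
  define T0 where "T0 = (LEAST t. gap t \<le> \<epsilon>)"
  have "gap T0 \<le> \<epsilon>" and "T0 \<le> T"
    unfolding T0_def using \<open>gap T \<le> \<epsilon>\<close> by (auto intro: LeastI Least_le)
  have "gap 0 - gap k \<le> c * real k * G" if "k \<le> T0" for k
    using that
  proof (induction k)
    case (Suc k)
    have "\<forall>s\<le>k. \<epsilon> < gap s"
    proof (intro allI impI)
      fix s assume "s \<le> k"
      with Suc.prems have "s < (LEAST t. gap t \<le> \<epsilon>)"
        unfolding T0_def by simp
      from not_less_Least[OF this] show "\<epsilon> < gap s" by simp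
    qed
    then have "c * E k \<le> c * G"
      using flat c by (simp add: mult_left_mono)
    then have "gap k - gap (Suc k) \<le> c * G"
      using decrease[of k] by linarith
    with Suc show ?case by (simp add: algebra_simps)
  qed simp
  from this[OF order_refl] have "gap 0 - \<epsilon> \<le> c * real T0 * G"
    using \<open>gap T0 \<le> \<epsilon>\<close> by linarith
  also have "\<dots> \<le> c * real T * G"
    using \<open>T0 \<le> T\<close> c G by (intro mult_right_mono mult_left_mono) auto
  finally show ?thesis .
qed

theorem lemma4:
  fixes n m :: nat
    and \<rho>0 Obs :: "complex^'q::finite^'q"
    and H :: "'m::{finite,linorder} \<Rightarrow> complex^'q^'q"
    and M :: "(real, 'm) vec measure"
    and \<beta> \<eta> B b \<delta>0 \<epsilon> :: real
    and T :: nat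
  assumes n_pos: "n \<ge> 1"
    and qubits: "CARD('q) = 2 ^ n"
    and m_def: "CARD('m) = m"
    and state: "density \<rho>0"
    and obs: "chermitian Obs"
    and gens: "\<forall>j. chermitian (H j)"
    and init: "prob_space M" "sets M = sets borel"
    and smooth_diff: "\<forall>\<theta>. C_uni \<rho>0 Obs H differentiable (at \<theta>)"
    and smooth_lip: "\<forall>\<theta> \<phi>. norm (grad (C_uni \<rho>0 Obs H) \<theta> - grad (C_uni \<rho>0 Obs H) \<phi>) \<le> \<beta> * norm (\<theta> - \<phi>)"
    and step: "0 < \<eta>" "\<eta> \<le> 1 / \<beta>"
    and Bb: "B > 0" "b > 1"
    and flat: "\<forall>t. (\<forall>s\<le>t. (\<integral>\<theta>0. C_uni \<rho>0 Obs H (gd_iter (C_uni \<rho>0 Obs H) \<eta> \<theta>0 s)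
                                    - (INF \<theta>. C_uni \<rho>0 Obs H \<theta>) \<partial>M) > \<epsilon>)
               \<longrightarrow> (\<integral>\<theta>0. (norm (grad (C_uni \<rho>0 Obs H) (gd_iter (C_uni \<rho>0 Obs H) \<eta> \<theta>0 t)))\<^sup>2 \<partial>M)
                   \<le> real m * B / b ^ n"
    and gap0: "(\<integral>\<theta>0. C_uni \<rho>0 Obs H (gd_iter (C_uni \<rho>0 Obs H) \<eta> \<theta>0 0)
                                    - (INF \<theta>. C_uni \<rho>0 Obs H \<theta>) \<partial>M) \<ge> \<delta>0"
    and delta_pos: "\<delta>0 > 0"
    and gapT: "(\<integral>\<theta>0. C_uni \<rho>0 Obs H (gd_iter (C_uni \<rho>0 Obs H) \<eta> \<theta>0 T)
                                    - (INF \<theta>. C_uni \<rho>0 Obs H \<theta>) \<partial>M) \<le> \<epsilon>"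
    and eps_lt: "\<epsilon> < \<delta>0"
  shows "real T \<ge> 2 * (\<delta>0 - \<epsilon>) / (3 * \<eta> * (real m * B / b ^ n))"
proof -
  let ?f = "C_uni \<rho>0 Obs H"
  define G where "G = real m * B / b ^ n"
  define gap where "gap t = (\<integral>\<theta>0. ?f (gd_iter ?f \<eta> \<theta>0 t) - (INF \<theta>. ?f \<theta>) \<partial>M)" for t
  define E where "E t = (\<integral>\<theta>0. (norm (grad ?f (gd_iter ?f \<eta> \<theta>0 t)))\<^sup>2 \<partial>M)" for t
  have "0 < real m"
    by (simp add: m_def[symmetric])
  with Bb have "0 < G"
    by (simp add: G_def)
  have bounded: "\<bar>?f \<theta>\<bar> \<le> entry_l1 Obs * entry_l1 \<rho>0 * real CARD('q) ^ 4" for \<theta>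
    using gens by (intro abs_C_uni_le) auto
  have "gap 0 - \<epsilon> \<le> 3 / 2 * \<eta> * real T * G"
  proof (rule hitting_time_lower_bound)
    show "gap k - gap (Suc k) \<le> 3 / 2 * \<eta> * E k" for k
      unfolding gap_def E_def
      using smooth_diff smooth_lip by (intro expected_gd_step_decrease_le[OF init _ _ step bounded]) auto
    show "E t \<le> G" if "\<forall>s\<le>t. \<epsilon> < gap s" for t
      using flat that unfolding E_def G_def gap_def by blast
  qed (use step \<open>0 < G\<close> gapT in \<open>auto simp: gap_def\<close>)
  with gap0 have "2 * (\<delta>0 - \<epsilon>) \<le> real T * (3 * \<eta> * G)"
    unfolding gap_def by (simp add: algebra_simps)
  moreover have "0 < 3 * \<eta> * G"
    using step \<open>0 < G\<close> by simp
  ultimately show ?thesis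
    unfolding G_def[symmetric] by (simp add: pos_divide_le_eq)
qed

end
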